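(* Let $\varphi:\mathbb{D}\to\mathbb{C}$ be a function and let $\mathcal{H}_k$ be a truncated space with orthonormal basis $\{f_m\}_{m\ge0}$, $f_m(z) = (1 + b_m z)z^m$, where $b_t = 0$ for all $t \ge n$. Then $\varphi$ is a multiplier of $\mathcal{H}_k$ (i.e. $\varphi\mathcal{H}_k \subseteq \mathcal{H}_k$) if and only if $\varphi \in H^\infty(\mathbb{D})$.
   Context: Fix $n \ge 1$. A truncated space is a reproducing kernel Hilbert space $\mathcal{H}_k$ of analytic functions on the open unit disc $\mathbb{D}$ (with scalar analytic kernel $k$) such that: $\mathbb{C}[z]\subseteq\mathcal{H}_k$; the multiplication operator $M_z$ is bounded on $\mathcal{H}_k$; and the functions $f_m(z) = (1 + b_m z)z^m$, $m \ge 0$, form an orthonormal basis of $\mathcal{H}_k$, for scalars $\{b_m\}_{m\ge0}$ with $b_t = 0$ for all $t \ge n$. $H^\infty(\mathbb{D})$ denotes the bounded analytic functions on $\mathbb{D}$. *)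

theory Defs
  imports "HOL-Analysis.Analysis" "HOL-Computational_Algebra.Polynomial"
begin

definition trunc_basis :: "(nat \<Rightarrow> complex) \<Rightarrow> nat \<Rightarrow> complex \<Rightarrow> complex" where
  "trunc_basis b m z = (1 + b m * z) * z ^ m"

definition sq_summable :: "(nat \<Rightarrow> complex) \<Rightarrow> bool" where
  "sq_summable a \<longleftrightarrow> summable (\<lambda>m. (norm (a m))\<^sup>2)"

definition trunc_repr :: "(nat \<Rightarrow> complex) \<Rightarrow> (nat \<Rightarrow> complex) \<Rightarrow> (complex \<Rightarrow> complex) \<Rightarrow> bool" where
  "trunc_repr b a f \<longleftrightarrow> sq_summable a \<and>
     (\<forall>z \<in> ball 0 1. (\<lambda>m. a m * trunc_basis b m z) sums f z)"

text \<open>Membership in the Hilbert space H_k in which (f_m) is an orthonormal basis: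
  exactly the functions sum_m a_m f_m with (a_m) in l^2 (as functions on the disc).\<close>
definition in_trunc_space :: "(nat \<Rightarrow> complex) \<Rightarrow> (complex \<Rightarrow> complex) \<Rightarrow> bool" where
  "in_trunc_space b f \<longleftrightarrow> (\<exists>a. trunc_repr b a f)"

definition trunc_multiplier :: "(nat \<Rightarrow> complex) \<Rightarrow> (complex \<Rightarrow> complex) \<Rightarrow> bool" where
  "trunc_multiplier b \<phi> \<longleftrightarrow>
     (\<forall>f. in_trunc_space b f \<longrightarrow> in_trunc_space b (\<lambda>z. \<phi> z * f z))"

definition H_infty :: "(complex \<Rightarrow> complex) set" where
  "H_infty = {\<phi>. \<phi> holomorphic_on ball 0 1 \<and> bounded (\<phi> ` ball 0 1)}"

text \<open>Standing hypotheses of a truncated space: polynomials belong to H_k and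
  M_z is bounded (norm of sum a_m f_m is the l^2 norm of a, since (f_m) is orthonormal).\<close>
definition trunc_space_hyps :: "(nat \<Rightarrow> complex) \<Rightarrow> bool" where
  "trunc_space_hyps b \<longleftrightarrow>
     (\<forall>p :: complex poly. in_trunc_space b (poly p)) \<and>
     (\<exists>C. \<forall>a f. trunc_repr b a f \<longrightarrow>
        (\<exists>c. trunc_repr b c (\<lambda>z. z * f z) \<and>
             (\<Sum>m. (norm (c m))\<^sup>2) \<le> C * (\<Sum>m. (norm (a m))\<^sup>2)))"

end

theory Submission
  imports Defs "HOL-Complex_Analysis.Complex_Analysis"
begin

(* Since b_t = 0 for t >= n, the monomial coefficients of sum_m a_m f_m differ from (a_m) at
   finitely many indices only, through an invertible triangular map.  Hence H_k and the Hardy space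
   H^2 contain the same functions and have the same multipliers.

   A bounded holomorphic phi multiplies H^2 into itself: on a circle |z| = r < 1, Bessel's
   inequality for phi p and Parseval's identity for a polynomial p bound the r-weighted coefficient
   energy of phi p by sup |phi|^2 times that of p, and r -> 1 gives the l^2 bound.

   Conversely, if phi is a multiplier, then phi = phi * 1 has Taylor coefficients a, and
   convolution with a maps l^2 into l^2.  A gliding hump argument, in place of the closed graph
   theorem, shows that this map is bounded by some C, and testing it on the Szego kernel
   (conj w ^ k)_k gives |phi w|^2 <= C. *)

section \<open>The truncated space is the Hardy space\<close>

definition disc_series :: "(nat \<Rightarrow> complex) \<Rightarrow> (complex \<Rightarrow> complex) \<Rightarrow> bool" where
  "disc_series c g \<longleftrightarrow> (\<forall>z \<in> ball 0 1. (\<lambda>m. c m * z ^ m) sums g z)"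

definition in_H2 :: "(complex \<Rightarrow> complex) \<Rightarrow> bool" where
  "in_H2 f \<longleftrightarrow> (\<exists>c. sq_summable c \<and> disc_series c f)"

definition H2_multiplier :: "(complex \<Rightarrow> complex) \<Rightarrow> bool" where
  "H2_multiplier \<phi> \<longleftrightarrow> (\<forall>f. in_H2 f \<longrightarrow> in_H2 (\<lambda>z. \<phi> z * f z))"

(* f_m = z^m + b_m z^(m+1), so sum_m a_m f_m has monomial coefficients a_m + b_(m-1) a_(m-1);
   basis_coeffs inverts this triangular map. *)
definition monomial_coeffs :: "(nat \<Rightarrow> complex) \<Rightarrow> (nat \<Rightarrow> complex) \<Rightarrow> nat \<Rightarrow> complex" where
  "monomial_coeffs b a m = a m + (case m of 0 \<Rightarrow> 0 | Suc k \<Rightarrow> b k * a k)"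

fun basis_coeffs :: "(nat \<Rightarrow> complex) \<Rightarrow> (nat \<Rightarrow> complex) \<Rightarrow> nat \<Rightarrow> complex" where
  "basis_coeffs b c 0 = c 0"
| "basis_coeffs b c (Suc k) = c (Suc k) - b k * basis_coeffs b c k"

lemma monomial_coeffs_basis_coeffs: "monomial_coeffs b (basis_coeffs b c) = c"
proof
  show "monomial_coeffs b (basis_coeffs b c) m = c m" for m
    by (cases m) (simp_all add: monomial_coeffs_def)
qed

lemma monomial_coeffs_eventually_eq:
  assumes "\<forall>t\<ge>n. b t = 0"
  shows "eventually (\<lambda>m. monomial_coeffs b a m = a m) sequentially"
proof (rule eventually_sequentiallyI[of "Suc n"])
  fix m assume "Suc n \<le> m"
  then show "monomial_coeffs b a m = a m"
    using assms by (cases m) (simp_all add: monomial_coeffs_def)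
qed

lemma sq_summable_eventually_eq:
  assumes "eventually (\<lambda>m. a m = c m) sequentially"
  shows "sq_summable a \<longleftrightarrow> sq_summable c"
  unfolding sq_summable_def
  by (rule summable_cong) (use assms in \<open>auto elim: eventually_mono\<close>)

lemma sq_summable_if_finite_support: "\<forall>k\<ge>M. S k = 0 \<Longrightarrow> sq_summable S"
  unfolding sq_summable_def by (rule summable_finite[of "{..<M}"]) auto

lemma sums_trunc_basis_iff:
  assumes "\<forall>t\<ge>n. b t = 0"
  shows "(\<lambda>m. a m * trunc_basis b m z) sums F \<longleftrightarrow> (\<lambda>m. monomial_coeffs b a m * z ^ m) sums F"
proof -
  define u where "u m = (case m of 0 \<Rightarrow> 0 | Suc k \<Rightarrow> a k * b k * z ^ m)" for m
  have "eventually (\<lambda>m. u m = 0) sequentially"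
    by (rule eventually_sequentiallyI[of "Suc n"]) (use assms in \<open>auto simp: u_def split: nat.split\<close>)
  then have "u \<longlonglongrightarrow> 0" by (rule tendsto_eventually)
  from telescope_sums[OF this] have du: "(\<lambda>m. u (Suc m) - u m) sums 0"
    by (simp add: u_def)
  have split: "a m * trunc_basis b m z = monomial_coeffs b a m * z ^ m + (u (Suc m) - u m)" for m
    by (cases m) (simp_all add: u_def trunc_basis_def monomial_coeffs_def algebra_simps)
  show ?thesis
    unfolding split using sums_add[OF _ du] sums_diff[OF _ du] by fastforce
qed

lemma in_trunc_space_iff_in_H2:
  assumes "\<forall>t\<ge>n. b t = 0"
  shows "in_trunc_space b f \<longleftrightarrow> in_H2 f"
proof
  assume "in_trunc_space b f"
  then obtain a where "sq_summable a" "\<forall>z\<in>ball 0 1. (\<lambda>m. a m * trunc_basis b m z) sums f z"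
    unfolding in_trunc_space_def trunc_repr_def by blast
  then have "sq_summable (monomial_coeffs b a)" "disc_series (monomial_coeffs b a) f"
    using sq_summable_eventually_eq[OF monomial_coeffs_eventually_eq[OF assms]]
      sums_trunc_basis_iff[OF assms] by (auto simp: disc_series_def)
  then show "in_H2 f" unfolding in_H2_def by blast
next
  assume "in_H2 f"
  then obtain c where c: "sq_summable c" "disc_series c f"
    unfolding in_H2_def by blast
  define a where "a = basis_coeffs b c"
  have a: "monomial_coeffs b a = c" by (simp add: a_def monomial_coeffs_basis_coeffs)
  then have "sq_summable a"
    using c(1) sq_summable_eventually_eq[OF monomial_coeffs_eventually_eq[OF assms], of a] by simp
  moreover have "\<forall>z\<in>ball 0 1. (\<lambda>m. a m * trunc_basis b m z) sums f z"
    using c(2) sums_trunc_basis_iff[OF assms, of a] a by (simp add: disc_series_def)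
  ultimately show "in_trunc_space b f" unfolding in_trunc_space_def trunc_repr_def by blast
qed

lemma trunc_multiplier_iff_H2_multiplier:
  assumes "\<forall>t\<ge>n. b t = 0"
  shows "trunc_multiplier b \<phi> \<longleftrightarrow> H2_multiplier \<phi>"
  unfolding trunc_multiplier_def H2_multiplier_def in_trunc_space_iff_in_H2[OF assms] ..

section \<open>Power series on the unit disc\<close>

definition conv :: "(nat \<Rightarrow> complex) \<Rightarrow> (nat \<Rightarrow> complex) \<Rightarrow> nat \<Rightarrow> complex" where
  "conv a f m = (\<Sum>i\<le>m. a i * f (m - i))"

definition conv_energy :: "(nat \<Rightarrow> complex) \<Rightarrow> (nat \<Rightarrow> complex) \<Rightarrow> nat \<Rightarrow> real" where
  "conv_energy a f N = (\<Sum>m<N. (norm (conv a f m))\<^sup>2)"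

lemma conv_cong: "(\<And>k. k \<le> m \<Longrightarrow> f k = h k) \<Longrightarrow> conv a f m = conv a h m"
  unfolding conv_def by (intro sum.cong) auto

lemma summable_norm_powser_if_sq_summable:
  assumes "sq_summable c" "norm z < 1"
  shows "summable (\<lambda>m. norm (c m * z ^ m))"
proof (rule summable_comparison_test[where g = "\<lambda>m. ((norm (c m))\<^sup>2 + (norm z ^ 2) ^ m) / 2"])
  have "norm (c m) * norm z ^ m \<le> ((norm (c m))\<^sup>2 + (norm z ^ m)\<^sup>2) / 2" for m
    using sum_squares_bound[of "norm (c m)" "norm z ^ m"] by simp
  then show "\<exists>N. \<forall>m\<ge>N. norm (norm (c m * z ^ m)) \<le> ((norm (c m))\<^sup>2 + (norm z ^ 2) ^ m) / 2"
    by (simp add: norm_mult norm_power power_mult[symmetric] mult.commute)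
  have "summable (\<lambda>m. (norm z ^ 2) ^ m)"
    using assms(2) by (intro summable_geometric) (simp add: abs_square_less_1)
  then show "summable (\<lambda>m. ((norm (c m))\<^sup>2 + (norm z ^ 2) ^ m) / 2)"
    using assms(1) unfolding sq_summable_def by (intro summable_divide summable_add)
qed

lemma disc_series_if_sq_summable:
  assumes "sq_summable c"
  shows "disc_series c (\<lambda>z. \<Sum>m. c m * z ^ m)"
  unfolding disc_series_def
proof
  fix z :: complex assume "z \<in> ball 0 1"
  then have "summable (\<lambda>m. c m * z ^ m)"
    using summable_norm_powser_if_sq_summable[OF assms] summable_norm_cancel by force
  then show "(\<lambda>m. c m * z ^ m) sums (\<Sum>m. c m * z ^ m)" by (rule summable_sums)
qed

lemma disc_series_summable_norm:
  assumes "disc_series c g" "norm z < 1"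
  shows "summable (\<lambda>m. norm (c m * z ^ m))"
proof -
  define x where "x = complex_of_real ((1 + norm z) / 2)"
  have "norm x = (1 + norm z) / 2" unfolding x_def norm_of_real by simp
  with assms have "summable (\<lambda>m. c m * x ^ m)" "norm z < norm x"
    unfolding disc_series_def sums_iff by auto
  then show ?thesis by (rule powser_insidea)
qed

lemma disc_series_mult:
  assumes "disc_series a \<phi>" "disc_series f F"
  shows "disc_series (conv a f) (\<lambda>z. \<phi> z * F z)"
  unfolding disc_series_def
proof
  fix z :: complex assume z: "z \<in> ball 0 1"
  have "(\<lambda>k. \<Sum>i\<le>k. (a i * z ^ i) * (f (k - i) * z ^ (k - i))) sums
        ((\<Sum>k. a k * z ^ k) * (\<Sum>k. f k * z ^ k))"
    using z by (intro Cauchy_product_sums disc_series_summable_norm[OF assms(1)]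
        disc_series_summable_norm[OF assms(2)]) auto
  moreover have "(\<Sum>k. a k * z ^ k) = \<phi> z" "(\<Sum>k. f k * z ^ k) = F z"
    using assms z unfolding disc_series_def by (auto simp: sums_iff)
  moreover have "(\<Sum>i\<le>k. (a i * z ^ i) * (f (k - i) * z ^ (k - i))) = conv a f k * z ^ k" for k
    unfolding conv_def sum_distrib_right
    by (rule sum.cong) (auto simp: algebra_simps power_add[symmetric])
  ultimately show "(\<lambda>m. conv a f m * z ^ m) sums (\<phi> z * F z)" by simp
qed

lemma disc_series_coeff:
  assumes "disc_series c g"
  shows "c m = (deriv ^^ m) g 0 / fact m"
proof -
  have "(1/2 :: complex) \<in> ball 0 1" by simp
  with assms have "summable (\<lambda>k. c k * (1/2) ^ k)"
    unfolding disc_series_def sums_iff by blast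
  then have "conv_radius c \<ge> norm (1/2 :: complex)" by (rule conv_radius_geI)
  then have "fps_conv_radius (Abs_fps c) > 0"
    by (simp add: fps_conv_radius_def) (metis ereal_less(2) less_le_trans zero_less_divide_1_iff zero_less_numeral)
  moreover have "eventually (\<lambda>z. z \<in> ball 0 1) (nhds (0::complex))"
    by (intro eventually_nhds_in_open) auto
  then have "eventually (\<lambda>z. eval_fps (Abs_fps c) z = g z) (nhds 0)"
    by eventually_elim (use assms in \<open>auto simp: disc_series_def eval_fps_def sums_iff\<close>)
  ultimately have "g has_fps_expansion Abs_fps c"
    by (simp add: has_fps_expansion_def)
  from fps_nth_fps_expansion[OF this, of m] show ?thesis by simp
qed

lemma disc_series_unique: "disc_series c g \<Longrightarrow> disc_series d g \<Longrightarrow> c = d"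
  using disc_series_coeff[of c g] disc_series_coeff[of d g] by auto

lemma disc_series_holomorphic: "disc_series c g \<Longrightarrow> g holomorphic_on ball 0 1"
  by (rule power_series_holomorphic[where a = c]) (auto simp: disc_series_def)

lemma disc_series_taylor:
  assumes "\<phi> holomorphic_on ball 0 1"
  shows "disc_series (\<lambda>m. (deriv ^^ m) \<phi> 0 / fact m) \<phi>"
  unfolding disc_series_def using holomorphic_power_series[OF assms] by fastforce

lemma disc_series_polynomial:
  "disc_series (\<lambda>m. if m < N then p m else 0) (\<lambda>z. \<Sum>m<N. p m * z ^ m)"
  unfolding disc_series_def
proof
  fix z :: complex
  have "(\<lambda>m. (if m < N then p m else 0) * z ^ m) sums (\<Sum>m<N. (if m < N then p m else 0) * z ^ m)"
    by (rule sums_finite) auto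
  then show "(\<lambda>m. (if m < N then p m else 0) * z ^ m) sums (\<Sum>m<N. p m * z ^ m)" by simp
qed

section \<open>Bounded functions are multipliers\<close>

lemma norm_circlepath_0: "0 \<le> r \<Longrightarrow> norm (circlepath 0 r t) = r"
  by (simp add: circlepath norm_mult)

lemma cnj_circlepath_0: "0 < r \<Longrightarrow> cnj (circlepath 0 r t) = of_real (r\<^sup>2) / circlepath 0 r t"
  using complex_norm_square[of "circlepath 0 r t"] norm_circlepath_0[of r t]
  by (auto simp: field_simps)

lemma circlepath_0_in_disc: "0 \<le> r \<Longrightarrow> r < 1 \<Longrightarrow> circlepath 0 r t \<in> ball 0 1"
  by (simp add: norm_circlepath_0)

lemma circlepath_integral_coeff:
  assumes "disc_series c g" "0 < r" "r < 1"
  shows "((\<lambda>t. g (circlepath 0 r t) / circlepath 0 r t ^ m) has_integral c m) {0..1}"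
proof -
  have hol: "g holomorphic_on ball 0 1" by (rule disc_series_holomorphic[OF assms(1)])
  have "cball 0 r \<subseteq> ball (0::complex) 1" "ball 0 r \<subseteq> ball (0::complex) 1" using assms by auto
  then have "((\<lambda>u. g u / (u - 0) ^ Suc m) has_contour_integral (2 * pi * \<i>) / fact m * (deriv ^^ m) g 0)
           (circlepath 0 r)"
    by (intro Cauchy_has_contour_integral_higher_derivative_circlepath)
       (use assms(2) in \<open>auto intro: holomorphic_on_subset[OF hol]
          continuous_on_subset[OF holomorphic_on_imp_continuous_on[OF hol]]\<close>)
  also have "(2 * pi * \<i>) / fact m * (deriv ^^ m) g 0 = (2 * pi * \<i>) * c m"
    using disc_series_coeff[OF assms(1), of m] by simp
  finally have "((\<lambda>t. g (circlepath 0 r t) / (circlepath 0 r t - 0) ^ Suc m *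
      vector_derivative (circlepath 0 r) (at t within {0..1})) has_integral (2 * pi * \<i>) * c m) {0..1}"
    unfolding has_contour_integral_def .
  also have "?this \<longleftrightarrow> ((\<lambda>t. (2 * pi * \<i>) * (g (circlepath 0 r t) / circlepath 0 r t ^ m))
      has_integral (2 * pi * \<i>) * c m) {0..1}"
  proof (rule has_integral_cong)
    fix t :: real assume "t \<in> {0..1}"
    then have "vector_derivative (circlepath 0 r) (at t within {0..1}) = 2 * pi * \<i> * circlepath 0 r t"
      using vector_derivative_circlepath01[of t 0 r] by (simp add: circlepath)
    moreover have "circlepath 0 r t \<noteq> 0" using norm_circlepath_0[of r t] assms(2) by auto
    ultimately show "g (circlepath 0 r t) / (circlepath 0 r t - 0) ^ Suc m *
        vector_derivative (circlepath 0 r) (at t within {0..1}) =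
        (2 * pi * \<i>) * (g (circlepath 0 r t) / circlepath 0 r t ^ m)"
      by (simp add: field_simps)
  qed
  finally show ?thesis by (subst (asm) has_integral_mult_right_iff) auto
qed

lemma circlepath_integral_mult_cnj_partial_sum:
  assumes "disc_series c g" "0 < r" "r < 1"
  shows "((\<lambda>t. g (circlepath 0 r t) * cnj (\<Sum>m<N. c m * circlepath 0 r t ^ m)) has_integral
           of_real (\<Sum>m<N. (norm (c m))\<^sup>2 * r ^ (2 * m))) {0..1}"
proof -
  let ?\<gamma> = "circlepath 0 r"
  have expand: "g (?\<gamma> t) * cnj (\<Sum>m<N. c m * ?\<gamma> t ^ m) =
      (\<Sum>m<N. (cnj (c m) * of_real (r ^ (2 * m))) * (g (?\<gamma> t) / ?\<gamma> t ^ m))" for t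
  proof -
    have "cnj (?\<gamma> t) ^ m = of_real (r ^ (2 * m)) / ?\<gamma> t ^ m" for m
      using cnj_circlepath_0[OF assms(2), of t] by (simp add: power_divide power_mult)
    moreover have "?\<gamma> t \<noteq> 0" using norm_circlepath_0[of r t] assms(2) by auto
    ultimately show ?thesis
      unfolding cnj_sum sum_distrib_left by (intro sum.cong) (simp_all add: field_simps)
  qed
  have "((\<lambda>t. \<Sum>m<N. (cnj (c m) * of_real (r ^ (2 * m))) * (g (?\<gamma> t) / ?\<gamma> t ^ m)) has_integral
           (\<Sum>m<N. (cnj (c m) * of_real (r ^ (2 * m))) * c m)) {0..1}"
    by (intro has_integral_sum has_integral_mult_right circlepath_integral_coeff assms) auto
  also have "(\<Sum>m<N. (cnj (c m) * of_real (r ^ (2 * m))) * c m) =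
      of_real (\<Sum>m<N. (norm (c m))\<^sup>2 * r ^ (2 * m))"
  proof -
    have "(complex_of_real (norm w))\<^sup>2 = w * cnj w" for w
      using complex_norm_square[of w] by simp
    then show ?thesis by (simp add: mult_ac)
  qed
  finally show ?thesis by (simp only: expand)
qed

lemma Re_mult_cnj_self: "Re (z * cnj z) = (norm z)\<^sup>2"
  by (simp add: complex_mult_cnj cmod_power2)

lemma parseval_circlepath_polynomial:
  assumes "0 < r" "r < 1"
  shows "((\<lambda>t. (norm (\<Sum>m<N. p m * circlepath 0 r t ^ m))\<^sup>2) has_integral
           (\<Sum>m<N. (norm (p m))\<^sup>2 * r ^ (2 * m))) {0..1}"
proof -
  let ?P = "\<lambda>z. \<Sum>m<N. p m * z ^ m"
  have "((\<lambda>t. ?P (circlepath 0 r t) * cnj (?P (circlepath 0 r t))) has_integral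
           of_real (\<Sum>m<N. (norm (p m))\<^sup>2 * r ^ (2 * m))) {0..1}"
    using circlepath_integral_mult_cnj_partial_sum[OF disc_series_polynomial[where N = N and p = p] assms, of N]
    by simp
  from has_integral_Re[OF this] show ?thesis
    by (simp only: Re_mult_cnj_self Re_complex_of_real)
qed

lemma Re_mult_cnj_le: "2 * Re (z * cnj w) \<le> (norm z)\<^sup>2 + (norm w)\<^sup>2"
proof -
  have "0 \<le> (Re z - Re w)\<^sup>2 + (Im z - Im w)\<^sup>2" by simp
  then show ?thesis unfolding cmod_power2 by (simp add: power2_eq_square algebra_simps)
qed

(* Compare g with its partial sum h of degree < N: the integrals of Re (g * cnj h) and |h|^2 over
   the circle both equal the left-hand side S, so 2 S <= I + S.  The majorant G spares us the
   integrability of |g|^2. *)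
lemma bessel_circlepath:
  assumes "disc_series c g" "0 < r" "r < 1"
    and "\<And>t. (norm (g (circlepath 0 r t)))\<^sup>2 \<le> G t" "(G has_integral I) {0..1}"
  shows "(\<Sum>m<N. (norm (c m))\<^sup>2 * r ^ (2 * m)) \<le> I"
proof -
  let ?\<gamma> = "circlepath 0 r" and ?h = "\<lambda>z. \<Sum>m<N. c m * z ^ m"
  define S where "S = (\<Sum>m<N. (norm (c m))\<^sup>2 * r ^ (2 * m))"
  have "((\<lambda>t. Re (g (?\<gamma> t) * cnj (?h (?\<gamma> t)))) has_integral S) {0..1}"
    using has_integral_Re[OF circlepath_integral_mult_cnj_partial_sum[OF assms(1-3), of N]]
    by (simp only: S_def Re_complex_of_real)
  then have "((\<lambda>t. 2 * Re (g (?\<gamma> t) * cnj (?h (?\<gamma> t)))) has_integral 2 * S) {0..1}"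
    by (rule has_integral_mult_right)
  moreover have "((\<lambda>t. G t + (norm (?h (?\<gamma> t)))\<^sup>2) has_integral I + S) {0..1}"
    unfolding S_def by (intro has_integral_add assms(5) parseval_circlepath_polynomial assms(2,3))
  moreover have "2 * Re (g (?\<gamma> t) * cnj (?h (?\<gamma> t))) \<le> G t + (norm (?h (?\<gamma> t)))\<^sup>2" for t
    using Re_mult_cnj_le[of "g (?\<gamma> t)" "?h (?\<gamma> t)"] assms(4)[of t] by linarith
  ultimately have "2 * S \<le> I + S" by (rule has_integral_le)
  then show ?thesis by (simp add: S_def)
qed

lemma conv_weighted_energy_le:
  assumes "disc_series a \<phi>" "\<forall>z\<in>ball 0 1. norm (\<phi> z) \<le> B" "0 < r" "r < 1"
  shows "(\<Sum>m<N. (norm (conv a p m))\<^sup>2 * r ^ (2 * m)) \<le> B\<^sup>2 * (\<Sum>m<N. (norm (p m))\<^sup>2 * r ^ (2 * m))"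
proof -
  let ?\<gamma> = "circlepath 0 r"
  define q where "q m = (if m < N then p m else 0)" for m
  define P where "P z = (\<Sum>m<N. p m * z ^ m)" for z
  have "disc_series (conv a q) (\<lambda>z. \<phi> z * P z)"
    unfolding q_def P_def by (rule disc_series_mult[OF assms(1) disc_series_polynomial])
  moreover have "(norm (\<phi> (?\<gamma> t) * P (?\<gamma> t)))\<^sup>2 \<le> B\<^sup>2 * (norm (P (?\<gamma> t)))\<^sup>2" for t
  proof -
    have "norm (\<phi> (?\<gamma> t)) \<le> B" using assms(2-4) circlepath_0_in_disc[of r t] by simp
    then show ?thesis
      by (simp add: norm_mult power_mult_distrib mult_right_mono power_mono)
  qed
  moreover have "((\<lambda>t. B\<^sup>2 * (norm (P (?\<gamma> t)))\<^sup>2) has_integral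
      B\<^sup>2 * (\<Sum>m<N. (norm (p m))\<^sup>2 * r ^ (2 * m))) {0..1}"
    unfolding P_def by (intro has_integral_mult_right parseval_circlepath_polynomial assms(3,4))
  ultimately have "(\<Sum>m<N. (norm (conv a q m))\<^sup>2 * r ^ (2 * m)) \<le> B\<^sup>2 * (\<Sum>m<N. (norm (p m))\<^sup>2 * r ^ (2 * m))"
    by (rule bessel_circlepath[OF _ assms(3,4)])
  moreover have "conv a q m = conv a p m" if "m < N" for m
    by (rule conv_cong) (use that in \<open>simp add: q_def\<close>)
  ultimately show ?thesis by simp
qed

lemma conv_energy_le_if_bounded:
  assumes "disc_series a \<phi>" "\<forall>z\<in>ball 0 1. norm (\<phi> z) \<le> B"
  shows "conv_energy a p N \<le> B\<^sup>2 * (\<Sum>m<N. (norm (p m))\<^sup>2)"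
proof -
  define F where "F r = (\<Sum>m<N. (norm (conv a p m))\<^sup>2 * r ^ (2 * m)) -
      B\<^sup>2 * (\<Sum>m<N. (norm (p m))\<^sup>2 * r ^ (2 * m))" for r :: real
  have "(F \<longlongrightarrow> F 1) (at_left 1)"
    unfolding F_def by (intro tendsto_intros)
  moreover have "eventually (\<lambda>r. r \<in> {0<..<1}) (at_left (1::real))"
    by (rule eventually_at_left_real) simp
  then have "eventually (\<lambda>r. F r \<le> 0) (at_left 1)"
    by eventually_elim (use conv_weighted_energy_le[OF assms] in \<open>auto simp: F_def\<close>)
  ultimately have "F 1 \<le> 0"
    by (rule tendsto_upperbound) (rule trivial_limit_at_left_real)
  then show ?thesis by (simp add: F_def conv_energy_def)
qed

lemma H_infty_imp_H2_multiplier: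
  assumes "\<phi> \<in> H_infty"
  shows "H2_multiplier \<phi>"
  unfolding H2_multiplier_def
proof (intro allI impI)
  fix f assume "in_H2 f"
  then obtain c where c: "sq_summable c" "disc_series c f" unfolding in_H2_def by blast
  from assms have hol: "\<phi> holomorphic_on ball 0 1" and "bounded (\<phi> ` ball 0 1)"
    by (auto simp: H_infty_def)
  then obtain B where B: "\<forall>z\<in>ball 0 1. norm (\<phi> z) \<le> B" unfolding bounded_iff by auto
  define a where "a m = (deriv ^^ m) \<phi> 0 / fact m" for m
  have a: "disc_series a \<phi>" unfolding a_def by (rule disc_series_taylor[OF hol])
  have "conv_energy a c N \<le> B\<^sup>2 * (\<Sum>m. (norm (c m))\<^sup>2)" for N
  proof -
    have "(\<Sum>m<N. (norm (c m))\<^sup>2) \<le> (\<Sum>m. (norm (c m))\<^sup>2)"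
      using c(1) unfolding sq_summable_def by (intro sum_le_suminf) auto
    with conv_energy_le_if_bounded[OF a B, of c N] show ?thesis
      by (meson mult_left_mono order.trans zero_le_power2)
  qed
  then have "sq_summable (conv a c)"
    unfolding sq_summable_def conv_energy_def by (intro summableI_nonneg_bounded) auto
  with disc_series_mult[OF a c(2)] show "in_H2 (\<lambda>z. \<phi> z * f z)"
    unfolding in_H2_def by blast
qed

section \<open>Gliding hump\<close>

definition shift :: "nat \<Rightarrow> (nat \<Rightarrow> complex) \<Rightarrow> nat \<Rightarrow> complex" where
  "shift M p k = (if M \<le> k then p (k - M) else 0)"

lemma conv_add: "conv a (\<lambda>k. f k + h k) m = conv a f m + conv a h m"
  unfolding conv_def by (simp add: distrib_left sum.distrib)

lemma conv_scale: "conv a (\<lambda>k. c * f k) m = c * conv a f m"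
  unfolding conv_def by (simp add: sum_distrib_left mult_ac)

lemma conv_shift_below: "m < M \<Longrightarrow> conv a (shift M p) m = 0"
  unfolding conv_def shift_def by (intro sum.neutral) auto

lemma conv_shift: "conv a (shift M p) (M + m) = conv a p m"
proof -
  have "conv a (shift M p) (M + m) = (\<Sum>i\<le>m. a i * shift M p (M + m - i))"
    unfolding conv_def by (rule sum.mono_neutral_right) (auto simp: shift_def)
  also have "\<dots> = conv a p m"
    unfolding conv_def by (rule sum.cong) (auto simp: shift_def)
  finally show ?thesis .
qed

lemma sum_lessThan_add: "(\<Sum>k<M + n. h k) = (\<Sum>k<M. h k) + (\<Sum>l<n. h (M + l :: nat))"
  by (induction n) (auto simp: add.assoc)

lemma conv_energy_shift: "conv_energy a (shift M p) (M + n) = conv_energy a p n"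
  unfolding conv_energy_def sum_lessThan_add by (simp add: conv_shift_below conv_shift)

lemma conv_energy_cong: "(\<And>k. k < N \<Longrightarrow> f k = h k) \<Longrightarrow> conv_energy a f N = conv_energy a h N"
  unfolding conv_energy_def by (intro sum.cong refl arg_cong[where f = "\<lambda>x. (norm x)\<^sup>2"] conv_cong) auto

lemma conv_energy_scale: "conv_energy a (\<lambda>k. c * f k) N = (norm c)\<^sup>2 * conv_energy a f N"
  unfolding conv_energy_def conv_scale by (simp add: sum_distrib_left norm_mult power_mult_distrib)

lemma conv_energy_le_suminf:
  "summable (\<lambda>m. (norm (conv a f m))\<^sup>2) \<Longrightarrow> conv_energy a f N \<le> (\<Sum>m. (norm (conv a f m))\<^sup>2)"
  unfolding conv_energy_def by (rule sum_le_suminf) auto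

lemma conv_energy_unbounded_finite_support:
  assumes unbounded: "\<forall>C. \<exists>p N. sq_summable p \<and> C * (\<Sum>k. (norm (p k))\<^sup>2) < conv_energy a p N"
    and "D \<ge> 0"
  obtains p n where "\<forall>k\<ge>n. p k = 0" "D * (\<Sum>k<n. (norm (p k))\<^sup>2) < conv_energy a p n"
proof -
  obtain p0 n where p0: "sq_summable p0" "D * (\<Sum>k. (norm (p0 k))\<^sup>2) < conv_energy a p0 n"
    using unbounded by blast
  define p where "p k = (if k < n then p0 k else 0)" for k
  have "(\<Sum>k<n. (norm (p k))\<^sup>2) \<le> (\<Sum>k. (norm (p0 k))\<^sup>2)"
    using p0(1) unfolding sq_summable_def p_def by (simp add: sum_le_suminf)
  then have "D * (\<Sum>k<n. (norm (p k))\<^sup>2) \<le> D * (\<Sum>k. (norm (p0 k))\<^sup>2)"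
    using \<open>D \<ge> 0\<close> by (rule mult_left_mono)
  moreover have "conv_energy a p n = conv_energy a p0 n"
    by (rule conv_energy_cong) (simp add: p_def)
  ultimately have "D * (\<Sum>k<n. (norm (p k))\<^sup>2) < conv_energy a p n" using p0(2) by linarith
  moreover have "\<forall>k\<ge>n. p k = 0" by (simp add: p_def)
  ultimately show thesis by (rule that[rotated])
qed

lemma conv_energy_unbounded_block:
  assumes unbounded: "\<forall>C. \<exists>p N. sq_summable p \<and> C * (\<Sum>k. (norm (p k))\<^sup>2) < conv_energy a p N"
    and "\<epsilon> > 0"
  shows "\<exists>p n. (\<forall>k\<ge>n. p k = 0) \<and> (\<Sum>k<n. (norm (p k))\<^sup>2) \<le> \<epsilon> \<and> C \<le> conv_energy a p n"
proof -
  define D where "D = \<bar>C\<bar> / \<epsilon>"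
  have "D \<ge> 0" using \<open>\<epsilon> > 0\<close> by (simp add: D_def)
  with unbounded obtain p0 n where p0: "\<forall>k\<ge>n. p0 k = 0"
    and big: "D * (\<Sum>k<n. (norm (p0 k))\<^sup>2) < conv_energy a p0 n"
    by (rule conv_energy_unbounded_finite_support)
  define s where "s = (\<Sum>k<n. (norm (p0 k))\<^sup>2)"
  have "s \<ge> 0" unfolding s_def by (intro sum_nonneg) auto
  have "s \<noteq> 0"
  proof
    assume "s = 0"
    then have "\<forall>k<n. p0 k = 0" unfolding s_def by (simp add: sum_nonneg_eq_0_iff)
    then have "conv_energy a p0 n = conv_energy a (\<lambda>k. 0) n" by (intro conv_energy_cong) simp
    also have "\<dots> = 0" by (simp add: conv_energy_def conv_def)
    finally show False using big[folded s_def] \<open>s = 0\<close> by simp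
  qed
  with \<open>s \<ge> 0\<close> have "s > 0" by simp
  define t where "t = complex_of_real (sqrt (\<epsilon> / s))"
  have t: "(norm t)\<^sup>2 = \<epsilon> / s" using \<open>\<epsilon> > 0\<close> \<open>s > 0\<close> by (simp add: t_def)
  define p where "p k = t * p0 k" for k
  have "\<forall>k\<ge>n. p k = 0" using p0 by (simp add: p_def)
  moreover have "(\<Sum>k<n. (norm (p k))\<^sup>2) = \<epsilon>"
  proof -
    have "(\<Sum>k<n. (norm (p k))\<^sup>2) = (norm t)\<^sup>2 * s"
      unfolding s_def sum_distrib_left by (simp add: p_def norm_mult power_mult_distrib)
    with t \<open>s > 0\<close> show ?thesis by simp
  qed
  moreover have "C \<le> conv_energy a p n"
  proof -
    have "C \<le> (norm t)\<^sup>2 * (D * s)" using t \<open>s > 0\<close> \<open>\<epsilon> > 0\<close> by (simp add: D_def)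
    also have "\<dots> \<le> (norm t)\<^sup>2 * conv_energy a p0 n" using big[folded s_def] by (intro mult_left_mono) auto
    also have "\<dots> = conv_energy a p n" by (simp add: p_def[abs_def] conv_energy_scale)
    finally show ?thesis .
  qed
  ultimately show ?thesis by blast
qed

lemma conv_energy_add_shift_ge:
  assumes "summable (\<lambda>m. (norm (conv a S m))\<^sup>2)"
  shows "sqrt (conv_energy a p n) \<le>
    sqrt (conv_energy a (\<lambda>k. S k + shift M p k) (M + n)) + sqrt (\<Sum>m. (norm (conv a S m))\<^sup>2)"
proof -
  let ?A = "{..<M + n}" and ?u = "conv a (\<lambda>k. S k + shift M p k)" and ?v = "conv a S"
  have L2: "sqrt (conv_energy a f (M + n)) = L2_set (\<lambda>m. norm (conv a f m)) ?A" for f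
    by (simp add: L2_set_def conv_energy_def)
  have "sqrt (conv_energy a p n) = L2_set (\<lambda>m. norm (conv a (shift M p) m)) ?A"
    by (simp add: conv_energy_shift flip: L2)
  also have "\<dots> \<le> L2_set (\<lambda>m. norm (?u m) + norm (?v m)) ?A"
  proof (rule L2_set_mono)
    fix m
    have "conv a (shift M p) m = ?u m - ?v m" by (simp add: conv_add)
    then show "norm (conv a (shift M p) m) \<le> norm (?u m) + norm (?v m)"
      by (simp add: norm_triangle_ineq4)
  qed simp
  also have "\<dots> \<le> L2_set (\<lambda>m. norm (?u m)) ?A + L2_set (\<lambda>m. norm (?v m)) ?A"
    by (rule L2_set_triangle_ineq)
  also have "L2_set (\<lambda>m. norm (?v m)) ?A \<le> sqrt (\<Sum>m. (norm (?v m))\<^sup>2)"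
    using conv_energy_le_suminf[OF assms, of "M + n"] by (simp flip: L2)
  finally show ?thesis by (simp add: L2)
qed

lemma sum_norm_add_shift:
  assumes "\<forall>k\<ge>M. S k = 0"
  shows "(\<Sum>k<M + n. (norm (S k + shift M p k))\<^sup>2) = (\<Sum>k<M. (norm (S k))\<^sup>2) + (\<Sum>k<n. (norm (p k))\<^sup>2)"
  using assms by (simp add: sum_lessThan_add shift_def)

(* Convolution is causal, so blocks added beyond M at later stages do not change conv a S below M:
   the energy bound j^2 survives in the limit, while the norm bound 2 keeps the limit in l^2. *)
definition hump_invariant :: "(nat \<Rightarrow> complex) \<Rightarrow> nat \<Rightarrow> (nat \<Rightarrow> complex) \<Rightarrow> nat \<Rightarrow> bool" where
  "hump_invariant a j S M \<longleftrightarrow> (\<forall>k\<ge>M. S k = 0) \<and> j \<le> M \<and>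
     (\<Sum>k<M. (norm (S k))\<^sup>2) \<le> 2 - 2 * (1/2) ^ j \<and> (real j)\<^sup>2 \<le> conv_energy a S M"

lemma gliding_hump_step:
  assumes conv_l2: "\<forall>f. sq_summable f \<longrightarrow> sq_summable (conv a f)"
    and unbounded: "\<forall>C. \<exists>p N. sq_summable p \<and> C * (\<Sum>k. (norm (p k))\<^sup>2) < conv_energy a p N"
    and inv: "hump_invariant a j S M"
  shows "\<exists>S' M'. hump_invariant a (Suc j) S' M' \<and> M \<le> M' \<and> (\<forall>k<M. S' k = S k)"
proof -
  define R where "R = (\<Sum>m. (norm (conv a S m))\<^sup>2)"
  have S: "\<forall>k\<ge>M. S k = 0" "j \<le> M" "(\<Sum>k<M. (norm (S k))\<^sup>2) \<le> 2 - 2 * (1/2) ^ j"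
    using inv by (auto simp: hump_invariant_def)
  then have summable_R: "summable (\<lambda>m. (norm (conv a S m))\<^sup>2)"
    using conv_l2 sq_summable_if_finite_support by (simp add: sq_summable_def)
  obtain p n where p: "\<forall>k\<ge>n. p k = 0" "(\<Sum>k<n. (norm (p k))\<^sup>2) \<le> (1/2) ^ j"
      and p_energy: "(real j + 1 + sqrt R)\<^sup>2 \<le> conv_energy a p n"
    using conv_energy_unbounded_block[OF unbounded, where \<epsilon> = "(1/2) ^ j" and C = "(real j + 1 + sqrt R)\<^sup>2"]
    by auto
  define S' where "S' k = S k + shift M p k" for k
  have "R \<ge> 0" unfolding R_def by (intro suminf_nonneg summable_R) simp
  then have "1 \<le> (real j + 1 + sqrt R)\<^sup>2" by (intro one_le_power) simp
  with p_energy have "n \<noteq> 0" by (cases "n = 0") (simp_all add: conv_energy_def)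
  moreover have "\<forall>k\<ge>M + n. S' k = 0" using S(1) p(1) by (simp add: S'_def shift_def)
  moreover have "(\<Sum>k<M + n. (norm (S' k))\<^sup>2) \<le> 2 - 2 * (1/2) ^ Suc j"
    using S(1,3) p(2) by (simp add: S'_def sum_norm_add_shift)
  moreover have "(real (Suc j))\<^sup>2 \<le> conv_energy a S' (M + n)"
  proof -
    have "real j + 1 + sqrt R \<le> sqrt (conv_energy a p n)"
      using p_energy real_le_rsqrt by blast
    also have "\<dots> \<le> sqrt (conv_energy a S' (M + n)) + sqrt R"
      unfolding R_def S'_def by (rule conv_energy_add_shift_ge[OF summable_R])
    finally show ?thesis by (intro sqrt_ge_absD) simp
  qed
  ultimately have "hump_invariant a (Suc j) S' (M + n)"
    using S(2) by (simp add: hump_invariant_def)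
  moreover have "\<forall>k<M. S' k = S k" by (simp add: S'_def shift_def)
  ultimately show ?thesis by (intro exI[of _ S'] exI[of _ "M + n"]) simp
qed

lemma gliding_hump_sequence:
  assumes conv_l2: "\<forall>f. sq_summable f \<longrightarrow> sq_summable (conv a f)"
    and unbounded: "\<forall>C. \<exists>p N. sq_summable p \<and> C * (\<Sum>k. (norm (p k))\<^sup>2) < conv_energy a p N"
  obtains S M where "\<And>j. hump_invariant a j (S j) (M j)"
    and "\<And>i j k. i \<le> j \<Longrightarrow> k < M i \<Longrightarrow> S j k = S i k"
proof -
  have "\<exists>x. \<forall>j. hump_invariant a j (fst (x j)) (snd (x j)) \<and>
      snd (x j) \<le> snd (x (Suc j)) \<and> (\<forall>k<snd (x j). fst (x (Suc j)) k = fst (x j) k)"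
  proof (rule dependent_nat_choice)
    show "\<exists>x. hump_invariant a 0 (fst x) (snd x)"
      by (rule exI[of _ "(\<lambda>k. 0, 0)"]) (simp add: hump_invariant_def conv_energy_def)
    show "\<exists>y. hump_invariant a (Suc j) (fst y) (snd y) \<and> snd x \<le> snd y \<and> (\<forall>k<snd x. fst y k = fst x k)"
      if "hump_invariant a j (fst x) (snd x)" for x j
      using gliding_hump_step[OF conv_l2 unbounded that] by force
  qed
  then obtain x where x: "\<And>j. hump_invariant a j (fst (x j)) (snd (x j))"
      "\<And>j. snd (x j) \<le> snd (x (Suc j))" "\<And>j k. k < snd (x j) \<Longrightarrow> fst (x (Suc j)) k = fst (x j) k"
    by blast
  have M_mono: "snd (x i) \<le> snd (x j)" if "i \<le> j" for i j
    by (rule lift_Suc_mono_le[OF _ that]) (use x(2) in simp)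
  have "fst (x j) k = fst (x i) k" if "i \<le> j" "k < snd (x i)" for i j k
    using that(1)
  proof (induction j rule: dec_induct)
    case (step j)
    with that(2) M_mono[of i j] x(3)[of k j] show ?case by simp
  qed simp
  with x(1) show thesis by (rule that)
qed

lemma conv_energy_bounded_if_conv_l2:
  assumes conv_l2: "\<forall>f. sq_summable f \<longrightarrow> sq_summable (conv a f)"
  shows "\<exists>C. \<forall>p N. sq_summable p \<longrightarrow> conv_energy a p N \<le> C * (\<Sum>k. (norm (p k))\<^sup>2)"
proof (rule ccontr)
  assume "\<not> ?thesis"
  then have "\<forall>C. \<exists>p N. sq_summable p \<and> C * (\<Sum>k. (norm (p k))\<^sup>2) < conv_energy a p N"
    by (meson not_le)
  then obtain S M where inv: "\<And>j. hump_invariant a j (S j) (M j)"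
      and stable: "\<And>i j k. i \<le> j \<Longrightarrow> k < M i \<Longrightarrow> S j k = S i k"
    using gliding_hump_sequence[OF conv_l2] by blast
  define f where "f k = S (Suc k) k" for k
  have f_eq: "f k = S j k" if "k < M j" for j k
  proof (cases "j \<le> Suc k")
    case True
    then show ?thesis using stable[OF True that] by (simp add: f_def)
  next
    case False
    have "k < M (Suc k)" using inv[of "Suc k"] by (simp add: hump_invariant_def)
    with False show ?thesis using stable[of "Suc k" j k] by (simp add: f_def)
  qed
  have "sq_summable f"
    unfolding sq_summable_def
  proof (rule summableI_nonneg_bounded)
    fix K
    have "(\<Sum>k<K. (norm (f k))\<^sup>2) \<le> (\<Sum>k<M K. (norm (f k))\<^sup>2)"
      using inv[of K] by (intro sum_mono2) (auto simp: hump_invariant_def)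
    also have "\<dots> = (\<Sum>k<M K. (norm (S K k))\<^sup>2)" by (simp add: f_eq)
    also have "\<dots> \<le> 2 - 2 * (1/2) ^ K" using inv[of K] by (simp add: hump_invariant_def)
    also have "\<dots> \<le> 2" by simp
    finally show "(\<Sum>k<K. (norm (f k))\<^sup>2) \<le> 2" .
  qed simp
  then have summable_R: "summable (\<lambda>m. (norm (conv a f m))\<^sup>2)"
    using conv_l2 by (simp add: sq_summable_def)
  define R where "R = (\<Sum>m. (norm (conv a f m))\<^sup>2)"
  have "(real j)\<^sup>2 \<le> R" for j
  proof -
    have "(real j)\<^sup>2 \<le> conv_energy a (S j) (M j)" using inv[of j] by (simp add: hump_invariant_def)
    also have "\<dots> = conv_energy a f (M j)" by (rule conv_energy_cong) (simp add: f_eq)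
    also have "\<dots> \<le> R" unfolding R_def by (rule conv_energy_le_suminf[OF summable_R])
    finally show ?thesis .
  qed
  moreover have "R < real (nat \<lceil>R\<rceil> + 1)" by linarith
  moreover have "real (nat \<lceil>R\<rceil> + 1) \<le> (real (nat \<lceil>R\<rceil> + 1))\<^sup>2" by (simp add: power2_eq_square)
  ultimately show False by (meson leD order.trans)
qed

section \<open>Multipliers are bounded\<close>

lemma norm_sum_mult_square_le:
  fixes x y :: "'a \<Rightarrow> 'b::real_normed_div_algebra"
  shows "(norm (\<Sum>i\<in>A. x i * y i))\<^sup>2 \<le> (\<Sum>i\<in>A. (norm (x i))\<^sup>2) * (\<Sum>i\<in>A. (norm (y i))\<^sup>2)"
proof -
  have "norm (\<Sum>i\<in>A. x i * y i) \<le> (\<Sum>i\<in>A. norm (x i) * norm (y i))"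
    by (rule order.trans[OF norm_sum]) (simp add: norm_mult)
  then have "(norm (\<Sum>i\<in>A. x i * y i))\<^sup>2 \<le> (\<Sum>i\<in>A. norm (x i) * norm (y i))\<^sup>2"
    by (rule power_mono) simp
  also have "\<dots> \<le> (\<Sum>i\<in>A. (norm (x i))\<^sup>2) * (\<Sum>i\<in>A. (norm (y i))\<^sup>2)"
    by (rule Cauchy_Schwarz_ineq_sum)
  finally show ?thesis .
qed

lemma disc_series_szego_kernel:
  assumes "w \<in> ball 0 1"
  shows "disc_series (\<lambda>k. cnj w ^ k) (\<lambda>z. 1 / (1 - cnj w * z))"
  unfolding disc_series_def
proof
  fix z :: complex assume "z \<in> ball 0 1"
  with assms have "norm w * norm z < 1 * 1" by (intro mult_strict_mono') auto
  then have "norm (cnj w * z) < 1" by (simp add: norm_mult)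
  then show "(\<lambda>m. cnj w ^ m * z ^ m) sums (1 / (1 - cnj w * z))"
    using geometric_sums[of "cnj w * z"] by (simp add: power_mult_distrib)
qed

lemma norm_le_sqrt_if_conv_energy_bounded:
  assumes a: "disc_series a \<phi>"
    and C: "\<forall>p N. sq_summable p \<longrightarrow> conv_energy a p N \<le> C * (\<Sum>k. (norm (p k))\<^sup>2)"
    and w: "w \<in> ball 0 1"
  shows "norm (\<phi> w) \<le> sqrt C"
proof -
  define \<rho> where "\<rho> = (norm w)\<^sup>2"
  have \<rho>: "0 \<le> \<rho>" "\<rho> < 1" using w by (auto simp: \<rho>_def abs_square_less_1)
  define p where "p k = cnj w ^ k" for k
  have geom: "(\<lambda>k. \<rho> ^ k) sums (1 / (1 - \<rho>))" using \<rho> by (intro geometric_sums) simp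
  moreover have "(norm (p k))\<^sup>2 = \<rho> ^ k" for k
    by (simp add: p_def \<rho>_def norm_power power_mult[symmetric] mult.commute)
  ultimately have p_l2: "sq_summable p" "(\<Sum>k. (norm (p k))\<^sup>2) = 1 / (1 - \<rho>)"
    by (simp_all add: sq_summable_def sums_iff)
  from disc_series_mult[OF a disc_series_szego_kernel[OF w, folded p_def[abs_def]]] w
  have "(\<lambda>m. conv a p m * w ^ m) sums (\<phi> w * (1 / (1 - cnj w * w)))"
    unfolding disc_series_def by blast
  moreover have "cnj w * w = of_real \<rho>"
    using complex_norm_square[of w] by (simp add: \<rho>_def mult.commute)
  ultimately have "(\<lambda>m. conv a p m * w ^ m) sums (\<phi> w / (1 - \<rho>))" by simp
  then have "(\<lambda>N. (norm (\<Sum>m<N. conv a p m * w ^ m))\<^sup>2) \<longlonglongrightarrow> (norm (\<phi> w / (1 - \<rho>)))\<^sup>2"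
    unfolding sums_def by (intro tendsto_intros)
  moreover have "(norm (\<Sum>m<N. conv a p m * w ^ m))\<^sup>2 \<le> C / (1 - \<rho>) * (1 / (1 - \<rho>))" for N
  proof -
    have "(norm (\<Sum>m<N. conv a p m * w ^ m))\<^sup>2 \<le> conv_energy a p N * (\<Sum>m<N. \<rho> ^ m)"
      using norm_sum_mult_square_le[of "conv a p" "\<lambda>m. w ^ m" "{..<N}"]
      by (simp add: conv_energy_def \<rho>_def norm_power power_mult[symmetric] mult.commute)
    also have "\<dots> \<le> C / (1 - \<rho>) * (1 / (1 - \<rho>))"
    proof (rule mult_mono)
      show "conv_energy a p N \<le> C / (1 - \<rho>)" using C p_l2 by (metis times_divide_eq_right mult_1_right)
      show "(\<Sum>m<N. \<rho> ^ m) \<le> 1 / (1 - \<rho>)"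
        using sum_le_suminf[of "\<lambda>m. \<rho> ^ m" "{..<N}"] \<rho> geom
        by (auto simp: sums_iff)
      show "0 \<le> C / (1 - \<rho>)"
        using \<open>conv_energy a p N \<le> C / (1 - \<rho>)\<close> unfolding conv_energy_def
        by (meson order.trans sum_nonneg zero_le_power2)
    qed (use \<rho> in \<open>simp add: sum_nonneg\<close>)
    finally show ?thesis .
  qed
  ultimately have "(norm (\<phi> w / (1 - \<rho>)))\<^sup>2 \<le> C / (1 - \<rho>) * (1 / (1 - \<rho>))"
    using LIMSEQ_le_const2 by blast
  moreover have "norm (1 - complex_of_real \<rho>) = 1 - \<rho>"
    using \<rho> by (metis abs_of_nonneg diff_ge_0_iff_ge less_imp_le norm_of_real of_real_1 of_real_diff)
  ultimately have "(norm (\<phi> w))\<^sup>2 / (1 - \<rho>)\<^sup>2 \<le> C / (1 - \<rho>)\<^sup>2"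
    by (simp add: norm_divide power_divide power2_eq_square)
  then have "(norm (\<phi> w))\<^sup>2 \<le> C"
    using \<rho> by (simp add: divide_le_cancel)
  then show ?thesis by (rule real_le_rsqrt)
qed

lemma H2_multiplier_imp_H_infty:
  assumes mult: "H2_multiplier \<phi>"
  shows "\<phi> \<in> H_infty"
proof -
  have "disc_series (\<lambda>m. if m < 1 then 1 else 0) (\<lambda>z. 1)"
    using disc_series_polynomial[where N = 1 and p = "\<lambda>_. 1"] by simp
  moreover have "sq_summable (\<lambda>m. if m < 1 then 1 else 0)"
    by (rule sq_summable_if_finite_support[of 1]) simp
  ultimately have "in_H2 (\<lambda>z. 1)" unfolding in_H2_def by blast
  with mult obtain a where a: "disc_series a \<phi>"
    unfolding H2_multiplier_def in_H2_def by fastforce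
  have "sq_summable (conv a f)" if f: "sq_summable f" for f
  proof -
    have F: "disc_series f (\<lambda>z. \<Sum>m. f m * z ^ m)" by (rule disc_series_if_sq_summable[OF f])
    with f mult obtain d where d: "sq_summable d" "disc_series d (\<lambda>z. \<phi> z * (\<Sum>m. f m * z ^ m))"
      unfolding H2_multiplier_def in_H2_def by blast
    have "d = conv a f" by (rule disc_series_unique[OF d(2) disc_series_mult[OF a F]])
    with d(1) show ?thesis by simp
  qed
  then obtain C where "\<forall>p N. sq_summable p \<longrightarrow> conv_energy a p N \<le> C * (\<Sum>k. (norm (p k))\<^sup>2)"
    using conv_energy_bounded_if_conv_l2 by blast
  then have "\<forall>w\<in>ball 0 1. norm (\<phi> w) \<le> sqrt C"
    using norm_le_sqrt_if_conv_energy_bounded[OF a] by blast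
  then have "bounded (\<phi> ` ball 0 1)" unfolding bounded_iff by blast
  with disc_series_holomorphic[OF a] show ?thesis by (simp add: H_infty_def)
qed

theorem theorem4p4:
  fixes n :: nat and b :: "nat \<Rightarrow> complex" and \<phi> :: "complex \<Rightarrow> complex"
  assumes "n \<ge> 1"
    and "\<forall>t\<ge>n. b t = 0"
    and "trunc_space_hyps b"
  shows "trunc_multiplier b \<phi> \<longleftrightarrow> \<phi> \<in> H_infty"
proof -
  have "trunc_multiplier b \<phi> \<longleftrightarrow> H2_multiplier \<phi>"
    by (rule trunc_multiplier_iff_H2_multiplier[OF assms(2)])
  also have "\<dots> \<longleftrightarrow> \<phi> \<in> H_infty"
    using H2_multiplier_imp_H_infty H_infty_imp_H2_multiplier by blast
  finally show ?thesis .
qed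

end
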